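(* Consider the fixed-design additive regression setting, the estimator $\hat g=\sum_{j=1}^p\hat g_j$ and the tuning parameters described in the context. Assume the sub-Gaussian noise condition and the entropy condition hold, and that the empirical compatibility condition holds for some subset $S\subset\{1,\dots,p\}$ and constants $\kappa_0>0$, $\xi_0>1$. Let $\bar g=\sum_{j=1}^p\bar g_j\in\mathcal G$ be arbitrary. Then for any $A_0>(\xi_0+1)/(\xi_0-1)$, with probability at least $1-\epsilon$, $$\mathcal D_n(\hat g,\bar g)\le \xi_1^{-1}\Delta_n(\bar g,S)+2\xi_2^2\kappa_0^{-2}\Big(\sum_{j\in S}\lambda_{nj}^2\Big),$$ where $\xi_1=1-2A_0/\{(\xi_0+1)(A_0-1)\}\in(0,1]$, $\xi_2=(\xi_0+1)(A_0-1)$, $$\mathcal D_n(\hat g,\bar g)=\tfrac12\|\hat g-g^*\|_n^2+\tfrac12\|\hat g-\bar g\|_n^2+(A_0-1)R_n(\hat g-\bar g),$$ $$\Delta_n(\bar g,S)=\tfrac12\|\bar g-g^*\|_n^2+2A_0\Big(\sum_{j=1}^p\rho_{nj}\|\bar g_j\|_{F,j}+\sum_{j\notin S}\lambda_{nj}\|\bar g_j\|_n\Big),$$ and $R_n(\hat g-\bar g)=\sum_{j}\{\rho_{nj}\|\hat g_j-\bar g_j\|_{F,j}+\lambda_{nj}\|\hat g_j-\bar g_j\|_n\}$.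
   Context: Data: $(Y_i,X_i)$, $i=1,\dots,n$, with $Y_i\in\mathbb R$, $X_i\in\mathbb R^d$, $Y_i=g^*(X_i)+\varepsilon_i$, where $g^*:\mathbb R^d\to\mathbb R$ is an arbitrary (not necessarily additive) function. Fixed design: $X_1,\dots,X_n$ are deterministic and probabilities refer to the noise. For $j=1,\dots,p$, $x^{(j)}$ is a fixed sub-vector of coordinates of $x\in\mathbb R^d$, $\mathcal G_j$ is a vector space of real functions of $x^{(j)}$ with a semi-norm $\|\cdot\|_{F,j}$, and $\mathcal G=\{g(x)=\sum_{j=1}^pg_j(x^{(j)}):g_j\in\mathcal G_j\}$; every $g\in\mathcal G$ is considered together with a decomposition $g=\sum_jg_j$, and component-wise quantities refer to it. Empirical norm and inner product: $\|f\|_n^2=n^{-1}\sum_{i=1}^nf(X_i)^2$, $\|Y-g\|_n^2=n^{-1}\sum_i\{Y_i-g(X_i)\}^2$, $\langle\varepsilon,f\rangle_n=n^{-1}\sum_i\varepsilon_if(X_i)$. $H(u,\mathcal F,\|\cdot\|)$ denotes the log of the minimal number of $\|\cdot\|$-balls of radius $u$ covering $\mathcal F$. Sub-Gaussian noise condition: $\varepsilon_1,\dots,\varepsilon_n$ are independent with mean zero and $\max_i D_0E\exp(\varepsilon_i^2/D_0)\le D_1$ for constants $D_0,D_1>0$. $C_1=C_1(D_0,D_1)>0$ is a constant depending only on $(D_0,D_1)$ such that for every $\delta>0$ and every class $\mathcal F$ with $\sup_{f\in\mathcal F}\|f\|_n\le\delta$ and every $\psi\ge\int_0^\delta H^{1/2}(u,\mathcal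 F,\|\cdot\|_n)du$, one has $P\{\sup_{f\in\mathcal F}|\langle\varepsilon,f\rangle_n|/C_1>n^{-1/2}\psi+\delta\sqrt{t/n}\}\le e^{-t}$ for all $t>0$. Entropy condition: for each $j$, with $\mathcal G_j(\delta)=\{f\in\mathcal G_j:\|f\|_{F,j}+\|f\|_n/\delta\le1\}$, a function $\psi_{nj}$ satisfies $\psi_{nj}(\delta)\ge\int_0^\delta H^{1/2}(u,\mathcal G_j(\delta),\|\cdot\|_n)\,du$ for $0<\delta\le1$. Tuning and estimator: constants $0<\epsilon<1$ and $0<w_{nj}\le1$; $\gamma_{nj}=n^{-1/2}\psi_{nj}(w_{nj})/w_{nj}$; $\lambda_{nj}=C_1\{\gamma_{nj}+\sqrt{\log(p/\epsilon)/n}\}$; $\rho_{nj}=\lambda_{nj}w_{nj}$; $R_n(g)=\sum_{j=1}^p(\rho_{nj}\|g_j\|_{F,j}+\lambda_{nj}\|g_j\|_n)$. For a constant $A_0>1$, $\hat g=\sum_j\hat g_j$ is a minimizer of $K_n(g)=\|Y-g\|_n^2/2+A_0R_n(g)$ over $g\in\mathcal G$ and decompositions. Empirical compatibility condition for $(S,\kappa_0,\xi_0)$: for all $f_j\in\mathcal G_j$ and $f=\sum_jf_j$, if $\sum_{j=1}^p\lambda_{nj}w_{nj}\|f_j\|_{F,j}+\sum_{j\notin S}\lambda_{nj}\|f_j\|_n\le\xi_0\sum_{j\in S}\lambda_{nj}\|f_j\|_n$, then $\kappa_0^2(\sum_{j\in S}\lambda_{nj}\|f_j\|_n)^2\le(\sum_{j\in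 S}\lambda_{nj}^2)\|f\|_n^2$. *)

theory Defs
  imports "HOL-Probability.Probability"
begin

definition emp_norm :: "(nat \<Rightarrow> 'x) \<Rightarrow> nat \<Rightarrow> ('x \<Rightarrow> real) \<Rightarrow> real" where
  "emp_norm X n f = sqrt ((1 / real n) * (\<Sum>i<n. (f (X i))^2))"

definition emp_inner :: "(nat \<Rightarrow> 'x) \<Rightarrow> nat \<Rightarrow> (nat \<Rightarrow> real) \<Rightarrow> ('x \<Rightarrow> real) \<Rightarrow> real" where
  "emp_inner X n e f = (1 / real n) * (\<Sum>i<n. e i * f (X i))"

definition emp_cover :: "(nat \<Rightarrow> 'x) \<Rightarrow> nat \<Rightarrow> real \<Rightarrow> ('x \<Rightarrow> real) set \<Rightarrow> ('x \<Rightarrow> real) set \<Rightarrow> bool" where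
  "emp_cover X n u F C \<longleftrightarrow> finite C \<and> F \<subseteq> (\<Union>c\<in>C. {f. emp_norm X n (\<lambda>x. f x - c x) \<le> u})"

definition covering_number :: "(nat \<Rightarrow> 'x) \<Rightarrow> nat \<Rightarrow> real \<Rightarrow> ('x \<Rightarrow> real) set \<Rightarrow> nat" where
  "covering_number X n u F = (LEAST N. \<exists>C. emp_cover X n u F C \<and> card C = N)"

text \<open>Square root of the metric entropy H(u,F,||.||_n) = log N(u,F,||.||_n); infinite if no
  finite cover exists.  (For empty F, N = 0 and we use log 1 = 0.)\<close>

definition sqrt_entropy :: "(nat \<Rightarrow> 'x) \<Rightarrow> nat \<Rightarrow> real \<Rightarrow> ('x \<Rightarrow> real) set \<Rightarrow> ennreal" where
  "sqrt_entropy X n u F =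
     (if \<exists>C. emp_cover X n u F C
      then ennreal (sqrt (ln (real (max 1 (covering_number X n u F))))) else \<infinity>)"

definition entropy_integral :: "(nat \<Rightarrow> 'x) \<Rightarrow> nat \<Rightarrow> real \<Rightarrow> ('x \<Rightarrow> real) set \<Rightarrow> ennreal" where
  "entropy_integral X n \<delta> F = (\<integral>\<^sup>+ u. indicator {0<..\<delta>} u * sqrt_entropy X n u F \<partial>lborel)"

definition entropy_bound :: "(nat \<Rightarrow> 'x) \<Rightarrow> nat \<Rightarrow> real \<Rightarrow> ('x \<Rightarrow> real) set \<Rightarrow> real \<Rightarrow> bool" where
  "entropy_bound X n \<delta> F \<psi> \<longleftrightarrow> 0 \<le> \<psi> \<and> entropy_integral X n \<delta> F \<le> ennreal \<psi>"

definition pen :: "nat \<Rightarrow> (nat \<Rightarrow> real) \<Rightarrow> (nat \<Rightarrow> real) \<Rightarrow> (nat \<Rightarrow> ('x \<Rightarrow> real) \<Rightarrow> real)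
    \<Rightarrow> (nat \<Rightarrow> 'x) \<Rightarrow> nat \<Rightarrow> (nat \<Rightarrow> 'x \<Rightarrow> real) \<Rightarrow> real" where
  "pen p rho lam Fn X n gs = (\<Sum>j<p. rho j * Fn j (gs j) + lam j * emp_norm X n (gs j))"

definition Kn :: "nat \<Rightarrow> (nat \<Rightarrow> real) \<Rightarrow> (nat \<Rightarrow> real) \<Rightarrow> (nat \<Rightarrow> ('x \<Rightarrow> real) \<Rightarrow> real)
    \<Rightarrow> (nat \<Rightarrow> 'x) \<Rightarrow> nat \<Rightarrow> real \<Rightarrow> (nat \<Rightarrow> real) \<Rightarrow> (nat \<Rightarrow> 'x \<Rightarrow> real) \<Rightarrow> real" where
  "Kn p rho lam Fn X n A0 Y gs =
     (1/2) * ((1 / real n) * (\<Sum>i<n. (Y i - (\<Sum>j<p. gs j (X i)))^2)) + A0 * pen p rho lam Fn X n gs"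

definition emp_compat :: "nat \<Rightarrow> (nat \<Rightarrow> ('x \<Rightarrow> real) set) \<Rightarrow> (nat \<Rightarrow> ('x \<Rightarrow> real) \<Rightarrow> real)
    \<Rightarrow> (nat \<Rightarrow> 'x) \<Rightarrow> nat \<Rightarrow> (nat \<Rightarrow> real) \<Rightarrow> (nat \<Rightarrow> real) \<Rightarrow> nat set \<Rightarrow> real \<Rightarrow> real \<Rightarrow> bool" where
  "emp_compat p G Fn X n lam w S \<kappa>0 \<xi>0 \<longleftrightarrow>
     (\<forall>fs. (\<forall>j<p. fs j \<in> G j) \<longrightarrow>
        (\<Sum>j<p. lam j * w j * Fn j (fs j)) + (\<Sum>j\<in>{..<p} - S. lam j * emp_norm X n (fs j))
          \<le> \<xi>0 * (\<Sum>j\<in>S. lam j * emp_norm X n (fs j)) \<longrightarrow>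
        \<kappa>0^2 * (\<Sum>j\<in>S. lam j * emp_norm X n (fs j))^2
          \<le> (\<Sum>j\<in>S. (lam j)^2) * (emp_norm X n (\<lambda>x. \<Sum>j<p. fs j x))^2)"

end

theory Submission
  imports Defs
begin

text \<open>On the event that \<open>\<bar>\<langle>\<epsilon>, f\<rangle>\<^sub>n\<bar> \<le> \<rho>\<^sub>j \<parallel>f\<parallel>\<^sub>F\<^sub>j + \<lambda>\<^sub>j \<parallel>f\<parallel>\<^sub>n\<close> for every component \<open>j\<close>
  and every \<open>f \<in> G\<^sub>j\<close>, the oracle inequality is deterministic. This event has probability at
  least \<open>1 - \<epsilon>\<close>: on the ball \<open>\<parallel>f\<parallel>\<^sub>F\<^sub>j + \<parallel>f\<parallel>\<^sub>n / w\<^sub>j \<le> 1\<close> it is the defining property of \<open>C\<^sub>1\<close>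
  with \<open>t = log (p / \<epsilon>)\<close>, both sides are homogeneous in \<open>f\<close>, and a union bound over the
  \<open>p\<close> components costs \<open>p \<cdot> \<epsilon> / p\<close>. The independence and moment assumptions on the noise
  enter only through that property of \<open>C\<^sub>1\<close>.

  On the event, comparing \<open>K\<^sub>n\<close> at \<open>ghat\<close> with \<open>K\<^sub>n\<close> along the segment from \<open>ghat\<close> to \<open>gbar\<close>
  gives \<open>\<langle>Y - ghat, gbar - ghat\<rangle>\<^sub>n \<le> A\<^sub>0 (R\<^sub>n gbar - R\<^sub>n ghat)\<close>. Polarization and the
  componentwise triangle inequality turn this into \<open>D \<le> \<Delta> + 2 A\<^sub>0 T\<close>, where
  \<open>T = (\<Sum>j\<in>S. \<lambda>\<^sub>j \<parallel>ghat\<^sub>j - gbar\<^sub>j\<parallel>\<^sub>n)\<close>. If \<open>\<xi>\<^sub>2 T \<le> D\<close> this rearranges to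
  \<open>D \<le> \<Delta> / \<xi>\<^sub>1\<close>. Otherwise \<open>ghat - gbar\<close> lies in the cone of the compatibility condition,
  so \<open>\<kappa>\<^sub>0\<^sup>2 T\<^sup>2 \<le> (\<Sum>j\<in>S. \<lambda>\<^sub>j\<^sup>2) \<parallel>ghat - gbar\<parallel>\<^sub>n\<^sup>2 \<le> 2 (\<Sum>j\<in>S. \<lambda>\<^sub>j\<^sup>2) D < 2 (\<Sum>j\<in>S. \<lambda>\<^sub>j\<^sup>2) \<xi>\<^sub>2 T\<close>,
  which bounds \<open>T\<close> and hence \<open>D\<close>.\<close>

lemma emp_norm_nonneg: "0 \<le> emp_norm X n f"
  unfolding emp_norm_def by (simp add: sum_nonneg)

lemma emp_norm_power2: "(emp_norm X n f)\<^sup>2 = (1 / real n) * (\<Sum>i<n. (f (X i))\<^sup>2)"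
  unfolding emp_norm_def by (simp add: sum_nonneg)

lemma emp_norm_eq_L2_set: "emp_norm X n f = sqrt (1 / real n) * L2_set (\<lambda>i. f (X i)) {..<n}"
  unfolding emp_norm_def L2_set_def by (simp add: real_sqrt_mult[symmetric])

lemma emp_norm_add_le: "emp_norm X n (\<lambda>x. f x + g x) \<le> emp_norm X n f + emp_norm X n g"
  using mult_left_mono[OF L2_set_triangle_ineq[of "\<lambda>i. f (X i)" "\<lambda>i. g (X i)" "{..<n}"],
      of "sqrt (1 / real n)"]
  by (simp add: emp_norm_eq_L2_set distrib_left)

lemma emp_norm_mult: "emp_norm X n (\<lambda>x. c * f x) = \<bar>c\<bar> * emp_norm X n f"
proof -
  have "L2_set (\<lambda>i. c * f (X i)) {..<n} = \<bar>c\<bar> * L2_set (\<lambda>i. f (X i)) {..<n}"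
    unfolding L2_set_def
    by (simp add: power_mult_distrib real_sqrt_mult sum_nonneg flip: sum_distrib_left)
  then show ?thesis
    by (simp add: emp_norm_eq_L2_set)
qed

lemma emp_norm_diff_le: "emp_norm X n (\<lambda>x. f x - g x) \<le> emp_norm X n f + emp_norm X n g"
  using emp_norm_add_le[of X n f "\<lambda>x. (-1) * g x"] emp_norm_mult[of X n "-1" g] by simp

lemma emp_norm_convex:
  assumes "0 \<le> t" "t \<le> 1"
  shows "emp_norm X n (\<lambda>x. (1 - t) * f x + t * g x) \<le> (1 - t) * emp_norm X n f + t * emp_norm X n g"
  using emp_norm_add_le[of X n "\<lambda>x. (1 - t) * f x" "\<lambda>x. t * g x"] assms by (simp add: emp_norm_mult)

lemma emp_inner_sum: "emp_inner X n e (\<lambda>x. \<Sum>j<p. f j x) = (\<Sum>j<p. emp_inner X n e (f j))"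
  unfolding emp_inner_def by (simp add: sum_distrib_left sum.swap[of _ "{..<n}"])

lemma emp_inner_mult: "emp_inner X n e (\<lambda>x. c * f x) = c * emp_inner X n e f"
  unfolding emp_inner_def by (simp add: sum_distrib_left algebra_simps)

lemma emp_inner_eq_0_if_emp_norm_eq_0:
  assumes "emp_norm X n f = 0"
  shows "emp_inner X n e f = 0"
proof (cases "n = 0")
  case False
  then have "(\<Sum>i<n. (f (X i))\<^sup>2) = 0"
    using emp_norm_power2[of X n f] assms by simp
  then have "\<forall>i<n. f (X i) = 0"
    by (simp add: sum_nonneg_eq_0_iff)
  then show ?thesis
    unfolding emp_inner_def by simp
qed (simp add: emp_inner_def)

lemma emp_inner_residual_polarization:
  "emp_inner X n (\<lambda>i. gstar (X i) + e i - a (X i)) (\<lambda>x. b x - a x)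
   = (1/2) * (emp_norm X n (\<lambda>x. a x - gstar x))\<^sup>2 + (1/2) * (emp_norm X n (\<lambda>x. a x - b x))\<^sup>2
     - (1/2) * (emp_norm X n (\<lambda>x. b x - gstar x))\<^sup>2 - emp_inner X n e (\<lambda>x. a x - b x)"
proof -
  have pointwise: "(g + \<epsilon> - u) * (v - u)
      = (1/2) * (u - g)\<^sup>2 + (1/2) * (u - v)\<^sup>2 - (1/2) * (v - g)\<^sup>2 - \<epsilon> * (u - v)"
    for g \<epsilon> u v :: real
    by (simp add: power2_eq_square field_simps)
  show ?thesis
    unfolding emp_inner_def emp_norm_power2 pointwise
    by (simp only: sum.distrib sum_subtractf flip: sum_distrib_left) (simp add: algebra_simps)
qed

lemma le_if_le_add_small_multiple:
  fixes a b c :: real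
  assumes "0 \<le> c" and le: "\<And>t. 0 < t \<Longrightarrow> t \<le> 1 \<Longrightarrow> a \<le> b + t * c"
  shows "a \<le> b"
proof (rule field_le_epsilon)
  fix \<epsilon> :: real
  assume "0 < \<epsilon>"
  define t where "t = min 1 (\<epsilon> / (c + 1))"
  have "0 < t" "t \<le> 1"
    using \<open>0 < \<epsilon>\<close> \<open>0 \<le> c\<close> by (auto simp: t_def)
  have "t * c \<le> \<epsilon> / (c + 1) * c"
    using \<open>0 \<le> c\<close> by (intro mult_right_mono) (auto simp: t_def)
  also have "\<dots> \<le> \<epsilon>"
    using \<open>0 < \<epsilon>\<close> \<open>0 \<le> c\<close> by (simp add: field_simps)
  finally show "a \<le> b + \<epsilon>"
    using le[OF \<open>0 < t\<close> \<open>t \<le> 1\<close>] by simp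
qed

lemma Kn_convex_combination:
  "Kn p rho lam Fn X n A0 Y (\<lambda>j x. (1 - t) * ga j x + t * gb j x)
   = Kn p rho lam Fn X n A0 Y ga
     - t * emp_inner X n (\<lambda>i. Y i - (\<Sum>j<p. ga j (X i))) (\<lambda>x. (\<Sum>j<p. gb j x) - (\<Sum>j<p. ga j x))
     + t\<^sup>2 / 2 * (emp_norm X n (\<lambda>x. (\<Sum>j<p. gb j x) - (\<Sum>j<p. ga j x)))\<^sup>2
     + A0 * (pen p rho lam Fn X n (\<lambda>j x. (1 - t) * ga j x + t * gb j x) - pen p rho lam Fn X n ga)"
proof -
  define r where "r i = Y i - (\<Sum>j<p. ga j (X i))" for i
  define d where "d i = (\<Sum>j<p. gb j (X i)) - (\<Sum>j<p. ga j (X i))" for i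
  define SR where "SR = (\<Sum>i<n. (r i)\<^sup>2)"
  define SRD where "SRD = (\<Sum>i<n. r i * d i)"
  define SD where "SD = (\<Sum>i<n. (d i)\<^sup>2)"
  have "(\<Sum>j<p. (1 - t) * ga j (X i) + t * gb j (X i)) = (\<Sum>j<p. ga j (X i)) + t * d i" for i
    by (simp add: d_def sum.distrib sum_subtractf sum_distrib_left algebra_simps)
  then have "(\<Sum>i<n. (Y i - (\<Sum>j<p. (1 - t) * ga j (X i) + t * gb j (X i)))\<^sup>2)
      = SR - 2 * t * SRD + t\<^sup>2 * SD"
    by (simp add: SR_def SRD_def SD_def r_def power2_eq_square algebra_simps sum.distrib
        sum_subtractf sum_distrib_left)
  then have segment: "Kn p rho lam Fn X n A0 Y (\<lambda>j x. (1 - t) * ga j x + t * gb j x)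
      = (1/2) * ((1 / real n) * (SR - 2 * t * SRD + t\<^sup>2 * SD))
        + A0 * pen p rho lam Fn X n (\<lambda>j x. (1 - t) * ga j x + t * gb j x)"
    unfolding Kn_def by simp
  have start: "Kn p rho lam Fn X n A0 Y ga = (1/2) * ((1 / real n) * SR) + A0 * pen p rho lam Fn X n ga"
    unfolding Kn_def SR_def r_def by simp
  have "emp_inner X n (\<lambda>i. Y i - (\<Sum>j<p. ga j (X i))) (\<lambda>x. (\<Sum>j<p. gb j x) - (\<Sum>j<p. ga j x))
      = (1 / real n) * SRD"
    unfolding emp_inner_def SRD_def r_def d_def by simp
  moreover have "(emp_norm X n (\<lambda>x. (\<Sum>j<p. gb j x) - (\<Sum>j<p. ga j x)))\<^sup>2 = (1 / real n) * SD"
    unfolding emp_norm_power2 SD_def d_def by simp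
  ultimately show ?thesis
    unfolding segment start by (simp add: algebra_simps)
qed

definition noise_dominated :: "(nat \<Rightarrow> 'x) \<Rightarrow> nat \<Rightarrow> (nat \<Rightarrow> real) \<Rightarrow> nat
    \<Rightarrow> (nat \<Rightarrow> ('x \<Rightarrow> real) set) \<Rightarrow> (nat \<Rightarrow> ('x \<Rightarrow> real) \<Rightarrow> real) \<Rightarrow> (nat \<Rightarrow> real) \<Rightarrow> (nat \<Rightarrow> real) \<Rightarrow> bool"
  where "noise_dominated X n e p G Fn rho lam \<longleftrightarrow>
    (\<forall>j<p. \<forall>f\<in>G j. \<bar>emp_inner X n e f\<bar> \<le> rho j * Fn j f + lam j * emp_norm X n f)"

definition emp_process_tail_bound :: "'w measure \<Rightarrow> (nat \<Rightarrow> 'w \<Rightarrow> real) \<Rightarrow> (nat \<Rightarrow> 'x) \<Rightarrow> nat \<Rightarrow> real \<Rightarrow> bool"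
  where "emp_process_tail_bound M eps X n C1 \<longleftrightarrow>
    (\<forall>\<delta> F \<psi> t. \<delta> > 0 \<longrightarrow> (\<forall>f\<in>F. emp_norm X n f \<le> \<delta>) \<longrightarrow> entropy_bound X n \<delta> F \<psi> \<longrightarrow> t > 0 \<longrightarrow>
       (\<exists>A\<in>sets M. measure M A \<ge> 1 - exp (- t) \<and>
          (\<forall>\<omega>\<in>A. \<forall>f\<in>F. \<bar>emp_inner X n (\<lambda>i. eps i \<omega>) f\<bar> / C1
                    \<le> \<psi> / sqrt (real n) + \<delta> * sqrt (t / real n))))"

lemma emp_inner_sum_le_pen:
  assumes "noise_dominated X n e p G Fn rho lam" and "\<forall>j<p. f j \<in> G j"
  shows "emp_inner X n e (\<lambda>x. \<Sum>j<p. f j x) \<le> pen p rho lam Fn X n f"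
  using assms unfolding emp_inner_sum pen_def noise_dominated_def
  by (intro sum_mono) (auto dest: abs_le_D1)

lemma pen_eq_split:
  assumes S: "S \<subseteq> {..<p}" and rho: "\<forall>j<p. rho j = lam j * w j"
  shows "pen p rho lam Fn X n f
    = ((\<Sum>j<p. lam j * w j * Fn j (f j)) + (\<Sum>j\<in>{..<p} - S. lam j * emp_norm X n (f j)))
      + (\<Sum>j\<in>S. lam j * emp_norm X n (f j))"
proof -
  have "(\<Sum>j<p. lam j * emp_norm X n (f j))
      = (\<Sum>j\<in>{..<p} - S. lam j * emp_norm X n (f j)) + (\<Sum>j\<in>S. lam j * emp_norm X n (f j))"
    using S by (simp add: sum.subset_diff)
  moreover have "(\<Sum>j<p. rho j * Fn j (f j)) = (\<Sum>j<p. lam j * w j * Fn j (f j))"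
    using rho by simp
  ultimately show ?thesis
    unfolding pen_def by (simp add: sum.distrib)
qed

lemma oracle_bound_in_cone:
  fixes D B T s \<xi> \<kappa> :: real
  assumes \<kappa>: "0 < \<kappa>" and \<xi>: "0 < \<xi>" and s: "0 \<le> s"
    and D: "0 \<le> D" "B \<le> 2 * D" "D < \<xi> * T" and compatible: "\<kappa>\<^sup>2 * T\<^sup>2 \<le> s * B"
  shows "D \<le> 2 * \<xi>\<^sup>2 / \<kappa>\<^sup>2 * s"
proof -
  have "0 < \<xi> * T"
    using D by linarith
  then have T_pos: "0 < T"
    using \<xi> by (simp add: zero_less_mult_iff)
  have "\<kappa>\<^sup>2 * T * T \<le> s * B"
    using compatible by (simp add: power2_eq_square)
  also have "\<dots> \<le> s * (2 * (\<xi> * T))"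
    using D s by (intro mult_left_mono) auto
  finally have "\<kappa>\<^sup>2 * T \<le> 2 * s * \<xi>"
    using T_pos by (simp add: algebra_simps)
  have "\<xi> * T = \<xi> * (\<kappa>\<^sup>2 * T) / \<kappa>\<^sup>2"
    using \<kappa> by simp
  also have "\<dots> \<le> \<xi> * (2 * s * \<xi>) / \<kappa>\<^sup>2"
    using \<open>\<kappa>\<^sup>2 * T \<le> 2 * s * \<xi>\<close> \<xi> by (intro divide_right_mono mult_left_mono) auto
  also have "\<dots> = 2 * \<xi>\<^sup>2 / \<kappa>\<^sup>2 * s"
    by (simp add: power2_eq_square)
  finally show ?thesis
    using D by linarith
qed

lemma oracle_dichotomy:
  fixes D Dn B T U s A0 \<xi>0 \<kappa>0 :: real
  assumes \<xi>0: "1 < \<xi>0" and A0: "(\<xi>0 + 1) / (\<xi>0 - 1) < A0" and \<kappa>0: "0 < \<kappa>0"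
    and nonneg: "0 \<le> U" "0 \<le> T" "0 \<le> B" "0 \<le> Dn" "0 \<le> s"
    and lower: "(A0 - 1) * (U + T) + B / 2 \<le> D"
    and upper: "D \<le> Dn + 2 * A0 * T"
    and compatible: "U \<le> \<xi>0 * T \<Longrightarrow> \<kappa>0\<^sup>2 * T\<^sup>2 \<le> s * B"
  shows "D \<le> Dn / (1 - 2 * A0 / ((\<xi>0 + 1) * (A0 - 1))) + 2 * ((\<xi>0 + 1) * (A0 - 1))\<^sup>2 / \<kappa>0\<^sup>2 * s"
proof -
  define \<xi>2 where "\<xi>2 = (\<xi>0 + 1) * (A0 - 1)"
  have "1 < (\<xi>0 + 1) / (\<xi>0 - 1)"
    using \<xi>0 by simp
  then have A0_gt_1: "1 < A0"
    using A0 by linarith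
  have "\<xi>0 + 1 < A0 * (\<xi>0 - 1)"
    using A0 \<xi>0 by (simp add: field_simps)
  then have \<xi>2_gt: "2 * A0 < \<xi>2"
    by (simp add: \<xi>2_def algebra_simps)
  have "0 \<le> (A0 - 1) * (U + T)"
    using A0_gt_1 nonneg by simp
  then have D_nonneg: "0 \<le> D" and B_le: "B \<le> 2 * D"
    using lower nonneg by linarith+
  show ?thesis
  proof (cases "\<xi>2 * T \<le> D")
    case True
    have "2 * A0 * T \<le> 2 * A0 / \<xi>2 * D"
      using True \<xi>2_gt A0_gt_1 by (simp add: field_simps)
    then have "D * (1 - 2 * A0 / \<xi>2) \<le> Dn"
      using upper by (simp add: algebra_simps)
    moreover have "0 < 1 - 2 * A0 / \<xi>2"
      using \<xi>2_gt A0_gt_1 by simp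
    ultimately have "D \<le> Dn / (1 - 2 * A0 / \<xi>2)"
      by (simp add: field_simps)
    moreover have "0 \<le> 2 * \<xi>2\<^sup>2 / \<kappa>0\<^sup>2 * s"
      using nonneg by simp
    ultimately show ?thesis
      unfolding \<xi>2_def by linarith
  next
    case False
    then have D_lt: "D < \<xi>2 * T"
      by simp
    then have "(A0 - 1) * (U + T) < (A0 - 1) * ((\<xi>0 + 1) * T)"
      using lower nonneg by (simp add: \<xi>2_def algebra_simps)
    then have "U + T < (\<xi>0 + 1) * T"
      using A0_gt_1 by (simp add: mult_less_cancel_left_pos)
    then have "U \<le> \<xi>0 * T"
      by (simp add: algebra_simps)
    then have "\<kappa>0\<^sup>2 * T\<^sup>2 \<le> s * B"
      by (rule compatible)
    then have "D \<le> 2 * \<xi>2\<^sup>2 / \<kappa>0\<^sup>2 * s"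
      using \<kappa>0 \<xi>2_gt A0_gt_1 nonneg D_nonneg B_le D_lt by (intro oracle_bound_in_cone) auto
    moreover have "0 \<le> Dn / (1 - 2 * A0 / \<xi>2)"
      using nonneg \<xi>2_gt A0_gt_1 by simp
    ultimately show ?thesis
      by (simp add: \<xi>2_def)
  qed
qed

lemma (in prob_space) prob_INT_ge:
  assumes I: "finite I" "I \<noteq> {}"
    and A: "\<And>i. i \<in> I \<Longrightarrow> A i \<in> events" "\<And>i. i \<in> I \<Longrightarrow> 1 - a \<le> prob (A i)"
  shows "1 - real (card I) * a \<le> prob (\<Inter>i\<in>I. A i)"
proof -
  have INT: "(\<Inter>i\<in>I. A i) \<in> events"
    using I A by (intro sets.finite_INT) auto
  have "prob (space M - (\<Inter>i\<in>I. A i)) = prob (\<Union>i\<in>I. space M - A i)"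
    by (auto intro!: arg_cong[where f = prob])
  also have "\<dots> \<le> (\<Sum>i\<in>I. prob (space M - A i))"
    using I A by (intro finite_measure_subadditive_finite) auto
  also have "\<dots> = (\<Sum>i\<in>I. 1 - prob (A i))"
    using A by (intro sum.cong) (auto simp: prob_compl)
  also have "\<dots> \<le> (\<Sum>i\<in>I. a)"
    using A(2) by (intro sum_mono) force
  finally show ?thesis
    using prob_compl[OF INT] by simp
qed

locale seminormed_components =
  fixes p :: nat and G :: "nat \<Rightarrow> ('x \<Rightarrow> real) set" and Fn :: "nat \<Rightarrow> ('x \<Rightarrow> real) \<Rightarrow> real"
  assumes G_add: "\<And>j f g. j < p \<Longrightarrow> f \<in> G j \<Longrightarrow> g \<in> G j \<Longrightarrow> (\<lambda>x. f x + g x) \<in> G j"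
    and G_scale: "\<And>j c f. j < p \<Longrightarrow> f \<in> G j \<Longrightarrow> (\<lambda>x. c * f x) \<in> G j"
    and Fn_nonneg: "\<And>j f. j < p \<Longrightarrow> f \<in> G j \<Longrightarrow> 0 \<le> Fn j f"
    and Fn_scale: "\<And>j c f. j < p \<Longrightarrow> f \<in> G j \<Longrightarrow> Fn j (\<lambda>x. c * f x) = \<bar>c\<bar> * Fn j f"
    and Fn_triangle: "\<And>j f g. j < p \<Longrightarrow> f \<in> G j \<Longrightarrow> g \<in> G j \<Longrightarrow>
                        Fn j (\<lambda>x. f x + g x) \<le> Fn j f + Fn j g"
begin

lemma diff_in_G: "j < p \<Longrightarrow> f \<in> G j \<Longrightarrow> g \<in> G j \<Longrightarrow> (\<lambda>x. f x - g x) \<in> G j"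
  using G_add[of j f "\<lambda>x. (-1) * g x"] G_scale[of j g "-1"] by simp

lemma convex_combination_in_G:
  "j < p \<Longrightarrow> f \<in> G j \<Longrightarrow> g \<in> G j \<Longrightarrow> (\<lambda>x. (1 - t) * f x + t * g x) \<in> G j"
  by (simp add: G_add G_scale)

lemma Fn_diff_le: "j < p \<Longrightarrow> f \<in> G j \<Longrightarrow> g \<in> G j \<Longrightarrow> Fn j (\<lambda>x. f x - g x) \<le> Fn j f + Fn j g"
  using Fn_triangle[of j f "\<lambda>x. (-1) * g x"] G_scale[of j g "-1"] Fn_scale[of j g "-1"] by simp

lemma Fn_convex:
  assumes "j < p" "f \<in> G j" "g \<in> G j" "0 \<le> t" "t \<le> 1"
  shows "Fn j (\<lambda>x. (1 - t) * f x + t * g x) \<le> (1 - t) * Fn j f + t * Fn j g"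
  using Fn_triangle[of j "\<lambda>x. (1 - t) * f x" "\<lambda>x. t * g x"] assms by (simp add: G_scale Fn_scale)

lemma pen_convex_combination:
  assumes ga: "\<forall>j<p. ga j \<in> G j" and gb: "\<forall>j<p. gb j \<in> G j"
    and rho: "\<forall>j<p. 0 \<le> rho j" and lam: "\<forall>j<p. 0 \<le> lam j" and t: "0 \<le> t" "t \<le> 1"
  shows "pen p rho lam Fn X n (\<lambda>j x. (1 - t) * ga j x + t * gb j x)
    \<le> (1 - t) * pen p rho lam Fn X n ga + t * pen p rho lam Fn X n gb"
proof -
  have "rho j * Fn j (\<lambda>x. (1 - t) * ga j x + t * gb j x)
        + lam j * emp_norm X n (\<lambda>x. (1 - t) * ga j x + t * gb j x)
      \<le> (1 - t) * (rho j * Fn j (ga j) + lam j * emp_norm X n (ga j))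
        + t * (rho j * Fn j (gb j) + lam j * emp_norm X n (gb j))" if "j < p" for j
  proof -
    have "rho j * Fn j (\<lambda>x. (1 - t) * ga j x + t * gb j x)
        \<le> rho j * ((1 - t) * Fn j (ga j) + t * Fn j (gb j))"
      using that ga gb rho t by (intro mult_left_mono Fn_convex) auto
    moreover have "lam j * emp_norm X n (\<lambda>x. (1 - t) * ga j x + t * gb j x)
        \<le> lam j * ((1 - t) * emp_norm X n (ga j) + t * emp_norm X n (gb j))"
      using that lam t by (intro mult_left_mono emp_norm_convex) auto
    ultimately show ?thesis
      by (simp add: algebra_simps)
  qed
  then have "pen p rho lam Fn X n (\<lambda>j x. (1 - t) * ga j x + t * gb j x)
      \<le> (\<Sum>j<p. (1 - t) * (rho j * Fn j (ga j) + lam j * emp_norm X n (ga j))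
                 + t * (rho j * Fn j (gb j) + lam j * emp_norm X n (gb j)))"
    unfolding pen_def by (intro sum_mono) auto
  also have "\<dots> = (1 - t) * pen p rho lam Fn X n ga + t * pen p rho lam Fn X n gb"
    by (simp add: pen_def sum.distrib flip: sum_distrib_left)
  finally show ?thesis .
qed

lemma minimiser_basic_inequality:
  assumes ghat: "\<forall>j<p. ghat j \<in> G j" and gbar: "\<forall>j<p. gbar j \<in> G j"
    and rho: "\<forall>j<p. 0 \<le> rho j" and lam: "\<forall>j<p. 0 \<le> lam j" and A0: "0 \<le> A0"
    and min: "\<forall>gs. (\<forall>j<p. gs j \<in> G j) \<longrightarrow>
                Kn p rho lam Fn X n A0 Y ghat \<le> Kn p rho lam Fn X n A0 Y gs"
  shows "emp_inner X n (\<lambda>i. Y i - (\<Sum>j<p. ghat j (X i))) (\<lambda>x. (\<Sum>j<p. gbar j x) - (\<Sum>j<p. ghat j x))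
    \<le> A0 * (pen p rho lam Fn X n gbar - pen p rho lam Fn X n ghat)"
    (is "?inner \<le> A0 * (?Pb - ?Ph)")
proof (rule le_if_le_add_small_multiple)
  let ?Q = "(emp_norm X n (\<lambda>x. (\<Sum>j<p. gbar j x) - (\<Sum>j<p. ghat j x)))\<^sup>2"
  show "0 \<le> ?Q / 2"
    by simp
  fix t :: real
  assume t: "0 < t" "t \<le> 1"
  let ?gt = "\<lambda>j x. (1 - t) * ghat j x + t * gbar j x"
  have "Kn p rho lam Fn X n A0 Y ghat \<le> Kn p rho lam Fn X n A0 Y ?gt"
    using ghat gbar by (intro min[rule_format] allI impI convex_combination_in_G) auto
  also have "\<dots> \<le> Kn p rho lam Fn X n A0 Y ghat - t * ?inner + t\<^sup>2 / 2 * ?Q + A0 * (t * (?Pb - ?Ph))"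
  proof -
    have "pen p rho lam Fn X n ?gt - ?Ph \<le> t * (?Pb - ?Ph)"
      using pen_convex_combination[OF ghat gbar rho lam] t by (simp add: algebra_simps)
    then show ?thesis
      unfolding Kn_convex_combination using A0 by (simp add: mult_left_mono)
  qed
  finally have "t * ?inner \<le> t * (A0 * (?Pb - ?Ph) + t * (?Q / 2))"
    by (simp add: power2_eq_square algebra_simps)
  then show "?inner \<le> A0 * (?Pb - ?Ph) + t * (?Q / 2)"
    using t by simp
qed

lemma pen_diff_excess_le:
  assumes S: "S \<subseteq> {..<p}" and ghat: "\<forall>j<p. ghat j \<in> G j" and gbar: "\<forall>j<p. gbar j \<in> G j"
    and rho: "\<forall>j<p. 0 \<le> rho j" and lam: "\<forall>j<p. 0 \<le> lam j"
  shows "pen p rho lam Fn X n (\<lambda>j x. ghat j x - gbar j x) + pen p rho lam Fn X n gbar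
           - pen p rho lam Fn X n ghat
    \<le> 2 * ((\<Sum>j<p. rho j * Fn j (gbar j)) + (\<Sum>j\<in>{..<p} - S. lam j * emp_norm X n (gbar j)))
      + 2 * (\<Sum>j\<in>S. lam j * emp_norm X n (\<lambda>x. ghat j x - gbar j x))"
proof -
  let ?d = "\<lambda>j x. ghat j x - gbar j x"
  have component: "rho j * Fn j (?d j) + lam j * emp_norm X n (?d j)
        + (rho j * Fn j (gbar j) + lam j * emp_norm X n (gbar j))
        - (rho j * Fn j (ghat j) + lam j * emp_norm X n (ghat j))
      \<le> 2 * (rho j * Fn j (gbar j))
        + (if j \<in> S then 2 * (lam j * emp_norm X n (?d j)) else 2 * (lam j * emp_norm X n (gbar j)))"
    if j: "j < p" for j
  proof -
    have "rho j * Fn j (?d j) \<le> rho j * (Fn j (ghat j) + Fn j (gbar j))"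
      using j ghat gbar rho by (intro mult_left_mono Fn_diff_le) auto
    moreover have "lam j * emp_norm X n (?d j) \<le> lam j * (emp_norm X n (ghat j) + emp_norm X n (gbar j))"
      using j lam by (intro mult_left_mono emp_norm_diff_le) auto
    moreover have "lam j * emp_norm X n (gbar j) \<le> lam j * (emp_norm X n (ghat j) + emp_norm X n (?d j))"
      using j lam emp_norm_diff_le[of X n "ghat j" "?d j"] by (intro mult_left_mono) auto
    ultimately show ?thesis
      by (auto simp: algebra_simps)
  qed
  have "pen p rho lam Fn X n ?d + pen p rho lam Fn X n gbar - pen p rho lam Fn X n ghat
      \<le> (\<Sum>j<p. 2 * (rho j * Fn j (gbar j))
        + (if j \<in> S then 2 * (lam j * emp_norm X n (?d j)) else 2 * (lam j * emp_norm X n (gbar j))))"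
    unfolding pen_def
    by (simp only: sum.distrib[symmetric] sum_subtractf[symmetric]) (intro sum_mono, use component in auto)
  also have "\<dots> = 2 * ((\<Sum>j<p. rho j * Fn j (gbar j)) + (\<Sum>j\<in>{..<p} - S. lam j * emp_norm X n (gbar j)))
      + 2 * (\<Sum>j\<in>S. lam j * emp_norm X n (?d j))"
  proof -
    have "{..<p} \<inter> {j. j \<in> S} = S" "{..<p} \<inter> - {j. j \<in> S} = {..<p} - S"
      using S by auto
    then show ?thesis
      by (simp add: sum.distrib sum.If_cases sum_distrib_left algebra_simps)
  qed
  finally show ?thesis .
qed

lemma emp_inner_le_by_homogeneity:
  assumes j: "j < p" and w: "0 < w" and f: "f \<in> G j"
    and unit_ball: "\<And>h. h \<in> G j \<Longrightarrow> Fn j h + emp_norm X n h / w \<le> 1 \<Longrightarrow> \<bar>emp_inner X n e h\<bar> \<le> b"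
  shows "\<bar>emp_inner X n e f\<bar> \<le> b * Fn j f + b / w * emp_norm X n f"
proof -
  define c where "c = Fn j f + emp_norm X n f / w"
  have Fn_f: "0 \<le> Fn j f"
    using Fn_nonneg[OF j f] .
  have norm_f: "0 \<le> emp_norm X n f / w"
    using w by (simp add: emp_norm_nonneg)
  show ?thesis
  proof (cases "c = 0")
    case True
    then have "Fn j f = 0" "emp_norm X n f / w = 0"
      using Fn_f norm_f unfolding c_def by linarith+
    then have "Fn j f = 0" "emp_norm X n f = 0"
      using w by simp_all
    then show ?thesis
      by (simp add: emp_inner_eq_0_if_emp_norm_eq_0)
  next
    case False
    then have c: "0 < c"
      using Fn_f norm_f unfolding c_def by linarith
    let ?h = "\<lambda>x. (1 / c) * f x"
    have h_Fn: "Fn j ?h = Fn j f / c"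
      using Fn_scale[OF j f, of "1 / c"] c by simp
    have h_norm: "emp_norm X n ?h = emp_norm X n f / c"
      using emp_norm_mult[of X n "1 / c" f] c by simp
    have "Fn j ?h + emp_norm X n ?h / w = (Fn j f + emp_norm X n f / w) / c"
      unfolding h_Fn h_norm using c w by (simp add: field_simps)
    then have "Fn j ?h + emp_norm X n ?h / w \<le> 1"
      using c by (simp add: c_def)
    then have "\<bar>emp_inner X n e ?h\<bar> \<le> b"
      by (rule unit_ball[OF G_scale[OF j f]])
    moreover have "emp_inner X n e ?h = emp_inner X n e f / c"
      using emp_inner_mult[of X n e "1 / c" f] by simp
    ultimately have "\<bar>emp_inner X n e f\<bar> / c \<le> b"
      using c by (simp add: abs_divide)
    then have "\<bar>emp_inner X n e f\<bar> \<le> b * c"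
      using c by (simp add: pos_divide_le_eq mult.commute)
    also have "\<dots> = b * Fn j f + b / w * emp_norm X n f"
      by (simp add: c_def distrib_left)
    finally show ?thesis .
  qed
qed

lemma basic_oracle_inequality:
  assumes noise: "noise_dominated X n e p G Fn rho lam"
    and min: "\<forall>gs. (\<forall>j<p. gs j \<in> G j) \<longrightarrow>
                Kn p rho lam Fn X n A0 (\<lambda>i. gstar (X i) + e i) ghat
                  \<le> Kn p rho lam Fn X n A0 (\<lambda>i. gstar (X i) + e i) gs"
    and ghat: "\<forall>j<p. ghat j \<in> G j" and gbar: "\<forall>j<p. gbar j \<in> G j"
    and rho: "\<forall>j<p. 0 \<le> rho j" and lam: "\<forall>j<p. 0 \<le> lam j" and A0: "0 \<le> A0"
    and S: "S \<subseteq> {..<p}"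
  shows "(1/2) * (emp_norm X n (\<lambda>x. (\<Sum>j<p. ghat j x) - gstar x))\<^sup>2
         + (1/2) * (emp_norm X n (\<lambda>x. (\<Sum>j<p. ghat j x) - (\<Sum>j<p. gbar j x)))\<^sup>2
         + (A0 - 1) * pen p rho lam Fn X n (\<lambda>j x. ghat j x - gbar j x)
       \<le> ((1/2) * (emp_norm X n (\<lambda>x. (\<Sum>j<p. gbar j x) - gstar x))\<^sup>2
            + 2 * A0 * ((\<Sum>j<p. rho j * Fn j (gbar j))
                        + (\<Sum>j\<in>{..<p} - S. lam j * emp_norm X n (gbar j))))
         + 2 * A0 * (\<Sum>j\<in>S. lam j * emp_norm X n (\<lambda>x. ghat j x - gbar j x))"
proof -
  let ?ghat = "\<lambda>x. \<Sum>j<p. ghat j x" and ?gbar = "\<lambda>x. \<Sum>j<p. gbar j x"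
  let ?d = "\<lambda>j x. ghat j x - gbar j x"
  let ?pen = "pen p rho lam Fn X n"
  have fit: "emp_inner X n (\<lambda>i. gstar (X i) + e i - ?ghat (X i)) (\<lambda>x. ?gbar x - ?ghat x)
      \<le> A0 * (?pen gbar - ?pen ghat)"
    using minimiser_basic_inequality[OF ghat gbar rho lam A0 min] by simp
  have d: "\<forall>j<p. ?d j \<in> G j"
    using ghat gbar by (simp add: diff_in_G)
  have noise_term: "emp_inner X n e (\<lambda>x. ?ghat x - ?gbar x) \<le> ?pen ?d"
    using emp_inner_sum_le_pen[OF noise d] by (simp add: sum_subtractf)
  have "A0 * (?pen ?d + ?pen gbar - ?pen ghat)
      \<le> A0 * (2 * ((\<Sum>j<p. rho j * Fn j (gbar j)) + (\<Sum>j\<in>{..<p} - S. lam j * emp_norm X n (gbar j)))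
             + 2 * (\<Sum>j\<in>S. lam j * emp_norm X n (?d j)))"
    using pen_diff_excess_le[OF S ghat gbar rho lam] A0 by (intro mult_left_mono) auto
  then show ?thesis
    using fit noise_term emp_inner_residual_polarization[of X n gstar e ?ghat ?gbar]
    by (simp add: algebra_simps)
qed

lemma oracle_inequality:
  assumes noise: "noise_dominated X n e p G Fn rho lam"
    and min: "\<forall>gs. (\<forall>j<p. gs j \<in> G j) \<longrightarrow>
                Kn p rho lam Fn X n A0 (\<lambda>i. gstar (X i) + e i) ghat
                  \<le> Kn p rho lam Fn X n A0 (\<lambda>i. gstar (X i) + e i) gs"
    and ghat: "\<forall>j<p. ghat j \<in> G j" and gbar: "\<forall>j<p. gbar j \<in> G j"
    and lam: "\<forall>j<p. 0 \<le> lam j" and w: "\<forall>j<p. 0 < w j" and rho: "\<forall>j<p. rho j = lam j * w j"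
    and S: "S \<subseteq> {..<p}" and \<kappa>0: "0 < \<kappa>0" and \<xi>0: "1 < \<xi>0"
    and compat: "emp_compat p G Fn X n lam w S \<kappa>0 \<xi>0"
    and A0: "(\<xi>0 + 1) / (\<xi>0 - 1) < A0"
  shows "(1/2) * (emp_norm X n (\<lambda>x. (\<Sum>j<p. ghat j x) - gstar x))\<^sup>2
         + (1/2) * (emp_norm X n (\<lambda>x. (\<Sum>j<p. ghat j x) - (\<Sum>j<p. gbar j x)))\<^sup>2
         + (A0 - 1) * pen p rho lam Fn X n (\<lambda>j x. ghat j x - gbar j x)
       \<le> ((1/2) * (emp_norm X n (\<lambda>x. (\<Sum>j<p. gbar j x) - gstar x))\<^sup>2
            + 2 * A0 * ((\<Sum>j<p. rho j * Fn j (gbar j))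
                        + (\<Sum>j\<in>{..<p} - S. lam j * emp_norm X n (gbar j))))
           / (1 - 2 * A0 / ((\<xi>0 + 1) * (A0 - 1)))
         + 2 * ((\<xi>0 + 1) * (A0 - 1))\<^sup>2 / \<kappa>0\<^sup>2 * (\<Sum>j\<in>S. (lam j)\<^sup>2)"
proof -
  let ?ghat = "\<lambda>x. \<Sum>j<p. ghat j x" and ?gbar = "\<lambda>x. \<Sum>j<p. gbar j x"
  let ?d = "\<lambda>j x. ghat j x - gbar j x"
  let ?A = "(emp_norm X n (\<lambda>x. ?ghat x - gstar x))\<^sup>2"
  let ?B = "(emp_norm X n (\<lambda>x. ?ghat x - ?gbar x))\<^sup>2"
  let ?C = "(emp_norm X n (\<lambda>x. ?gbar x - gstar x))\<^sup>2"
  let ?T = "\<Sum>j\<in>S. lam j * emp_norm X n (?d j)"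
  let ?U = "(\<Sum>j<p. lam j * w j * Fn j (?d j)) + (\<Sum>j\<in>{..<p} - S. lam j * emp_norm X n (?d j))"
  let ?V = "(\<Sum>j<p. rho j * Fn j (gbar j)) + (\<Sum>j\<in>{..<p} - S. lam j * emp_norm X n (gbar j))"
  let ?pen = "pen p rho lam Fn X n"
  have d: "\<forall>j<p. ?d j \<in> G j"
    using ghat gbar by (simp add: diff_in_G)
  have rho_nonneg: "\<forall>j<p. 0 \<le> rho j"
  proof (intro allI impI)
    fix j
    assume "j < p"
    then have "0 \<le> lam j" "0 \<le> w j"
      using lam w by (simp_all add: less_imp_le)
    then show "0 \<le> rho j"
      using rho \<open>j < p\<close> by simp
  qed
  have "0 < (\<xi>0 + 1) / (\<xi>0 - 1)"
    using \<xi>0 by simp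
  then have A0_pos: "0 < A0"
    using A0 by linarith
  have upper: "(1/2) * ?A + (1/2) * ?B + (A0 - 1) * ?pen ?d \<le> ((1/2) * ?C + 2 * A0 * ?V) + 2 * A0 * ?T"
    using A0_pos by (intro basic_oracle_inequality[OF noise min ghat gbar rho_nonneg lam _ S]) simp
  have split: "?pen ?d = ?U + ?T"
    by (rule pen_eq_split[OF S rho])
  have lower: "(A0 - 1) * (?U + ?T) + ?B / 2 \<le> (1/2) * ?A + (1/2) * ?B + (A0 - 1) * ?pen ?d"
    unfolding split by simp
  have compatible: "\<kappa>0\<^sup>2 * ?T\<^sup>2 \<le> (\<Sum>j\<in>S. (lam j)\<^sup>2) * ?B" if "?U \<le> \<xi>0 * ?T"
  proof -
    have "\<kappa>0\<^sup>2 * ?T\<^sup>2 \<le> (\<Sum>j\<in>S. (lam j)\<^sup>2) * (emp_norm X n (\<lambda>x. \<Sum>j<p. ?d j x))\<^sup>2"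
      using d that by (intro compat[unfolded emp_compat_def, rule_format]) simp_all
    then show ?thesis
      by (simp add: sum_subtractf)
  qed
  have U_nonneg: "0 \<le> ?U"
    using lam w d Fn_nonneg
    by (intro add_nonneg_nonneg sum_nonneg) (auto intro!: mult_nonneg_nonneg emp_norm_nonneg simp: less_imp_le)
  have T_nonneg: "0 \<le> ?T"
    using lam S by (intro sum_nonneg) (auto intro!: mult_nonneg_nonneg emp_norm_nonneg)
  have Dn_nonneg: "0 \<le> (1/2) * ?C + 2 * A0 * ?V"
    using rho_nonneg lam gbar Fn_nonneg A0_pos
    by (intro add_nonneg_nonneg mult_nonneg_nonneg sum_nonneg) (auto intro!: mult_nonneg_nonneg emp_norm_nonneg)
  show ?thesis
    by (rule oracle_dichotomy[OF \<xi>0 A0 \<kappa>0 U_nonneg T_nonneg zero_le_power2 Dn_nonneg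
          sum_nonneg[OF zero_le_power2] lower upper compatible])
qed

lemma emp_inner_bound_with_high_probability:
  assumes tail: "emp_process_tail_bound M eps X n C1" and C1: "0 < C1"
    and j: "j < p" and w: "0 < w" and t: "0 < t"
    and entropy: "entropy_bound X n w {f \<in> G j. Fn j f + emp_norm X n f / w \<le> 1} \<psi>"
    and lam: "lam = C1 * (\<psi> / (sqrt (real n) * w) + sqrt (t / real n))"
  shows "\<exists>A\<in>sets M. 1 - exp (- t) \<le> measure M A \<and>
           (\<forall>\<omega>\<in>A. \<forall>f\<in>G j. \<bar>emp_inner X n (\<lambda>i. eps i \<omega>) f\<bar> \<le> lam * w * Fn j f + lam * emp_norm X n f)"
proof -
  let ?ball = "{f \<in> G j. Fn j f + emp_norm X n f / w \<le> 1}"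
  have ball_norm: "\<forall>f\<in>?ball. emp_norm X n f \<le> w"
  proof
    fix f
    assume "f \<in> ?ball"
    then have "f \<in> G j" and "Fn j f + emp_norm X n f / w \<le> 1"
      by simp_all
    then have "emp_norm X n f / w \<le> 1"
      using Fn_nonneg[OF j \<open>f \<in> G j\<close>] by linarith
    then show "emp_norm X n f \<le> w"
      using w by (simp add: field_simps)
  qed
  obtain A where A: "A \<in> sets M" "1 - exp (- t) \<le> measure M A"
    and bound: "\<forall>\<omega>\<in>A. \<forall>f\<in>?ball. \<bar>emp_inner X n (\<lambda>i. eps i \<omega>) f\<bar> / C1
                  \<le> \<psi> / sqrt (real n) + w * sqrt (t / real n)"
    using tail[unfolded emp_process_tail_bound_def, rule_format, OF w ball_norm[rule_format] entropy t] by blast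
  have "\<psi> / (sqrt (real n) * w) * w = \<psi> / sqrt (real n)"
    using w by simp
  then have rescale: "C1 * (\<psi> / sqrt (real n) + w * sqrt (t / real n)) = lam * w"
    using w unfolding lam by (simp add: algebra_simps)
  have "\<bar>emp_inner X n (\<lambda>i. eps i \<omega>) f\<bar> \<le> lam * w * Fn j f + lam * emp_norm X n f"
    if "\<omega> \<in> A" "f \<in> G j" for \<omega> f
  proof -
    have "\<bar>emp_inner X n (\<lambda>i. eps i \<omega>) h\<bar> \<le> lam * w"
      if "h \<in> G j" "Fn j h + emp_norm X n h / w \<le> 1" for h
    proof -
      have "\<bar>emp_inner X n (\<lambda>i. eps i \<omega>) h\<bar> / C1 \<le> \<psi> / sqrt (real n) + w * sqrt (t / real n)"
        using bound \<open>\<omega> \<in> A\<close> that by blast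
      then have "\<bar>emp_inner X n (\<lambda>i. eps i \<omega>) h\<bar> \<le> (\<psi> / sqrt (real n) + w * sqrt (t / real n)) * C1"
        using C1 by (simp add: pos_divide_le_eq)
      also have "\<dots> = lam * w"
        by (subst mult.commute) (rule rescale)
      finally show ?thesis .
    qed
    then show ?thesis
      using emp_inner_le_by_homogeneity[OF j w \<open>f \<in> G j\<close>, of X n "\<lambda>i. eps i \<omega>" "lam * w"] w by simp
  qed
  then show ?thesis
    using A by blast
qed

lemma noise_dominated_with_high_probability:
  assumes M: "prob_space M" and tail: "emp_process_tail_bound M eps X n C1" and C1: "0 < C1"
    and p: "1 \<le> p" and epsilon: "0 < epsilon" "epsilon < 1"
    and w: "\<forall>j<p. 0 < w j"
    and entropy: "\<forall>j<p. entropy_bound X n (w j) {f \<in> G j. Fn j f + emp_norm X n f / w j \<le> 1} (psi j)"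
    and lam: "\<forall>j<p. lam j = C1 * (psi j / (sqrt (real n) * w j) + sqrt (ln (real p / epsilon) / real n))"
    and rho: "\<forall>j<p. rho j = lam j * w j"
  shows "\<exists>A\<in>sets M. 1 - epsilon \<le> measure M A \<and> (\<forall>\<omega>\<in>A. noise_dominated X n (\<lambda>i. eps i \<omega>) p G Fn rho lam)"
proof -
  interpret prob_space M
    by (rule M)
  define t where "t = ln (real p / epsilon)"
  have "1 < real p / epsilon"
    using p epsilon by (simp add: field_simps)
  then have t: "0 < t" and exp_t: "exp (- t) = epsilon / real p"
    by (simp_all add: t_def exp_minus)
  have "\<forall>j\<in>{..<p}. \<exists>A\<in>events. 1 - epsilon / real p \<le> prob A \<and>
          (\<forall>\<omega>\<in>A. \<forall>f\<in>G j. \<bar>emp_inner X n (\<lambda>i. eps i \<omega>) f\<bar> \<le> rho j * Fn j f + lam j * emp_norm X n f)"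
  proof
    fix j
    assume "j \<in> {..<p}"
    then show "\<exists>A\<in>events. 1 - epsilon / real p \<le> prob A \<and>
          (\<forall>\<omega>\<in>A. \<forall>f\<in>G j. \<bar>emp_inner X n (\<lambda>i. eps i \<omega>) f\<bar> \<le> rho j * Fn j f + lam j * emp_norm X n f)"
      using emp_inner_bound_with_high_probability[OF tail C1 _ _ t, of j "w j" "psi j" "lam j"]
        w entropy lam rho exp_t by (simp add: t_def)
  qed
  then obtain A where A: "\<And>j. j \<in> {..<p} \<Longrightarrow> A j \<in> events \<and> 1 - epsilon / real p \<le> prob (A j) \<and>
          (\<forall>\<omega>\<in>A j. \<forall>f\<in>G j. \<bar>emp_inner X n (\<lambda>i. eps i \<omega>) f\<bar> \<le> rho j * Fn j f + lam j * emp_norm X n f)"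
    by metis
  define E where "E = (\<Inter>j\<in>{..<p}. A j)"
  have "0 \<in> {..<p}"
    using p by simp
  then have "1 - real (card {..<p}) * (epsilon / real p) \<le> prob E" and E: "E \<in> events"
    unfolding E_def using A by (intro prob_INT_ge sets.finite_INT; auto)+
  moreover have "real (card {..<p}) * (epsilon / real p) = epsilon"
    using p by simp
  moreover have "noise_dominated X n (\<lambda>i. eps i \<omega>) p G Fn rho lam" if "\<omega> \<in> E" for \<omega>
    unfolding noise_dominated_def
  proof (intro allI impI ballI)
    fix j f
    assume "j < p" "f \<in> G j"
    then show "\<bar>emp_inner X n (\<lambda>i. eps i \<omega>) f\<bar> \<le> rho j * Fn j f + lam j * emp_norm X n f"
      using A[of j] that by (auto simp: E_def)
  qed
  ultimately show ?thesis
    using E by auto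
qed

end

theorem theorem1:
  fixes M :: "'w measure"
    and eps :: "nat \<Rightarrow> 'w \<Rightarrow> real"
    and X :: "nat \<Rightarrow> real^'d"
    and gstar :: "real^'d \<Rightarrow> real"
    and n p :: nat
    and J :: "nat \<Rightarrow> 'd set"
    and G :: "nat \<Rightarrow> (real^'d \<Rightarrow> real) set"
    and Fn :: "nat \<Rightarrow> (real^'d \<Rightarrow> real) \<Rightarrow> real"
    and D0 D1 C1 :: real
    and psi :: "nat \<Rightarrow> real \<Rightarrow> real"
    and epsilon :: real and w lam rho :: "nat \<Rightarrow> real"
    and A0 \<kappa>0 \<xi>0 :: real
    and S :: "nat set"
    and gbar :: "nat \<Rightarrow> real^'d \<Rightarrow> real"
  assumes n_pos: "n \<ge> 1" and p_pos: "p \<ge> 1"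
    \<comment> \<open>component spaces: vector spaces of functions of the sub-vector x^(j), with semi-norms\<close>
    and G_subvec: "\<And>j g x y. j < p \<Longrightarrow> g \<in> G j \<Longrightarrow> (\<forall>k\<in>J j. x $ k = y $ k) \<Longrightarrow> g x = g y"
    and G_zero: "\<And>j. j < p \<Longrightarrow> (\<lambda>x. 0) \<in> G j"
    and G_add: "\<And>j f g. j < p \<Longrightarrow> f \<in> G j \<Longrightarrow> g \<in> G j \<Longrightarrow> (\<lambda>x. f x + g x) \<in> G j"
    and G_scale: "\<And>j c f. j < p \<Longrightarrow> f \<in> G j \<Longrightarrow> (\<lambda>x. c * f x) \<in> G j"
    and Fn_nonneg: "\<And>j f. j < p \<Longrightarrow> f \<in> G j \<Longrightarrow> 0 \<le> Fn j f"
    and Fn_scale: "\<And>j c f. j < p \<Longrightarrow> f \<in> G j \<Longrightarrow> Fn j (\<lambda>x. c * f x) = \<bar>c\<bar> * Fn j f"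
    and Fn_triangle: "\<And>j f g. j < p \<Longrightarrow> f \<in> G j \<Longrightarrow> g \<in> G j \<Longrightarrow>
                        Fn j (\<lambda>x. f x + g x) \<le> Fn j f + Fn j g"
    \<comment> \<open>sub-Gaussian noise condition\<close>
    and M_prob: "prob_space M"
    and eps_indep: "prob_space.indep_vars M (\<lambda>_. borel) eps {..<n}"
    and eps_int: "\<And>i. i < n \<Longrightarrow> integrable M (eps i)"
    and eps_mean: "\<And>i. i < n \<Longrightarrow> (\<integral>\<omega>. eps i \<omega> \<partial>M) = 0"
    and D_pos: "D0 > 0" "D1 > 0"
    and subg_int: "\<And>i. i < n \<Longrightarrow> integrable M (\<lambda>\<omega>. exp ((eps i \<omega>)^2 / D0))"
    and subg: "\<And>i. i < n \<Longrightarrow> D0 * (\<integral>\<omega>. exp ((eps i \<omega>)^2 / D0) \<partial>M) \<le> D1"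
    \<comment> \<open>defining property of the constant C1 = C1(D0,D1)\<close>
    and C1_pos: "C1 > 0"
    and C1_conc: "\<And>\<delta> (F :: (real^'d \<Rightarrow> real) set) \<psi> t. \<delta> > 0 \<Longrightarrow>
         (\<forall>f\<in>F. emp_norm X n f \<le> \<delta>) \<Longrightarrow> entropy_bound X n \<delta> F \<psi> \<Longrightarrow> t > 0 \<Longrightarrow>
         \<exists>A\<in>sets M. measure M A \<ge> 1 - exp (- t) \<and>
            (\<forall>\<omega>\<in>A. \<forall>f\<in>F. \<bar>emp_inner X n (\<lambda>i. eps i \<omega>) f\<bar> / C1
                      \<le> \<psi> / sqrt (real n) + \<delta> * sqrt (t / real n))"
    \<comment> \<open>entropy condition\<close>
    and entropy: "\<And>j \<delta>. j < p \<Longrightarrow> 0 < \<delta> \<Longrightarrow> \<delta> \<le> 1 \<Longrightarrow>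
         entropy_bound X n \<delta> {f \<in> G j. Fn j f + emp_norm X n f / \<delta> \<le> 1} (psi j \<delta>)"
    \<comment> \<open>tuning parameters\<close>
    and epsilon_bounds: "0 < epsilon" "epsilon < 1"
    and w_bounds: "\<And>j. j < p \<Longrightarrow> 0 < w j \<and> w j \<le> 1"
    and lam_def: "\<And>j. lam j = C1 * (psi j (w j) / (sqrt (real n) * w j)
                                     + sqrt (ln (real p / epsilon) / real n))"
    and rho_def: "\<And>j. rho j = lam j * w j"
    \<comment> \<open>compatibility condition\<close>
    and S_sub: "S \<subseteq> {..<p}"
    and kappa_pos: "\<kappa>0 > 0" and xi_gt: "\<xi>0 > 1"
    and compat: "emp_compat p G Fn X n lam w S \<kappa>0 \<xi>0"
    and A0_gt: "A0 > (\<xi>0 + 1) / (\<xi>0 - 1)"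
    and gbar_in: "\<And>j. j < p \<Longrightarrow> gbar j \<in> G j"
  shows "\<exists>A\<in>sets M. measure M A \<ge> 1 - epsilon \<and>
    (\<forall>\<omega>\<in>A. \<forall>ghat.
       ((\<forall>j<p. ghat j \<in> G j) \<and>
        (\<forall>gs. (\<forall>j<p. gs j \<in> G j) \<longrightarrow>
           Kn p rho lam Fn X n A0 (\<lambda>i. gstar (X i) + eps i \<omega>) ghat
             \<le> Kn p rho lam Fn X n A0 (\<lambda>i. gstar (X i) + eps i \<omega>) gs))
       \<longrightarrow>
       (1/2) * (emp_norm X n (\<lambda>x. (\<Sum>j<p. ghat j x) - gstar x))^2
         + (1/2) * (emp_norm X n (\<lambda>x. (\<Sum>j<p. ghat j x) - (\<Sum>j<p. gbar j x)))^2
         + (A0 - 1) * pen p rho lam Fn X n (\<lambda>j x. ghat j x - gbar j x)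
       \<le> ((1/2) * (emp_norm X n (\<lambda>x. (\<Sum>j<p. gbar j x) - gstar x))^2
            + 2 * A0 * ((\<Sum>j<p. rho j * Fn j (gbar j))
                        + (\<Sum>j\<in>{..<p} - S. lam j * emp_norm X n (gbar j))))
           / (1 - 2 * A0 / ((\<xi>0 + 1) * (A0 - 1)))
         + 2 * ((\<xi>0 + 1) * (A0 - 1))^2 / \<kappa>0^2 * (\<Sum>j\<in>S. (lam j)^2))"
proof -
  interpret seminormed_components p G Fn
    using G_add G_scale Fn_nonneg Fn_scale Fn_triangle by unfold_locales
  have "emp_process_tail_bound M eps X n C1"
    unfolding emp_process_tail_bound_def using C1_conc by blast
  then have "\<exists>A\<in>sets M. 1 - epsilon \<le> measure M A \<and>
      (\<forall>\<omega>\<in>A. noise_dominated X n (\<lambda>i. eps i \<omega>) p G Fn rho lam)"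
    by (rule noise_dominated_with_high_probability[OF M_prob _ C1_pos p_pos epsilon_bounds,
          where w = w and psi = "\<lambda>j. psi j (w j)"])
      (auto simp: w_bounds entropy lam_def rho_def)
  then obtain A where A: "A \<in> sets M" "1 - epsilon \<le> measure M A"
    and dominated: "\<And>\<omega>. \<omega> \<in> A \<Longrightarrow> noise_dominated X n (\<lambda>i. eps i \<omega>) p G Fn rho lam"
    by blast
  have "0 < ln (real p / epsilon)"
    using p_pos epsilon_bounds by (simp add: field_simps)
  then have lam_nonneg: "\<forall>j<p. 0 \<le> lam j"
    using entropy w_bounds w_bounds[THEN conjunct1, THEN less_imp_le] C1_pos
    unfolding entropy_bound_def lam_def
    by (auto intro!: mult_nonneg_nonneg add_nonneg_nonneg divide_nonneg_nonneg)
  show ?thesis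
    by (intro bexI[OF _ A(1)] conjI A(2) ballI allI impI, elim conjE,
        rule oracle_inequality[where w = w, OF dominated])
      (simp_all add: gbar_in lam_nonneg w_bounds rho_def S_sub kappa_pos xi_gt compat A0_gt)
qed

end
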